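(* Let $R=\mathbb C[T]$, $\tilde{\mathcal A}=R[u_k^{(i)}:i,k\in\mathbb Z_{\ge0}]$, and let $\mathcal A$ be the quotient differential algebra of $\tilde{\mathcal A}$ by the relations $u_0=1$ and, for every $r\in\mathbb Z_{\ge0}$, $$u_r=\sum_{k=0}^{r}\binom{T-k}{r-k}(-1)^ku_k^{(r-k)}$$ (equivalently, $L(\partial)=\sum_{k\ge0}u_k\partial^{T-k}$ satisfies $L^*=L$). Denote by $\bar u_{2m}$ the image of $u_{2m}$ in $\mathcal A$. Then the set $\{\bar u_{2m}^{(i)}:i\in\mathbb Z_{\ge0},\ m\in\mathbb Z_{>0}\}$ is algebraically independent over $\mathbb C[T]$.
   Context: $u_k^{(i)}$ denotes $\partial^iu_k$ in the differential polynomial algebra. Binomial coefficients over $\mathbb C[T]$: $\binom{x}{j}=x(x-1)\cdots(x-j+1)/j!$. The $T$-shifted adjoint of $L=\sum_ka_k\partial^{T-k}$ is $L^*=\sum_k(-1)^k\partial^{T-k}\circ a_k$, where $\partial^{T-k}\circ a=\sum_{\ell\ge0}\binom{T-k}{\ell}a^{(\ell)}\partial^{T-k-\ell}$. *)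

theory Defs
  imports "HOL-Library.Poly_Mapping" "HOL-Computational_Algebra.Polynomial" Complex_Main
begin

text \<open>Coefficient ring R = C[T]; T is the polynomial variable [:0,1:].
  The polynomial algebra over R in the variables u_k^(i), indexed by pairs (k,i),
  in the usual Poly_Mapping representation: monomials are exponent maps
  (nat \<times> nat) \<Rightarrow>0 nat, polynomials are finitely supported maps from monomials to R.\<close>

type_synonym Atil = "((nat \<times> nat, nat) poly_mapping, complex poly) poly_mapping"

definition constA :: "complex poly \<Rightarrow> Atil" where
  "constA c = Poly_Mapping.single 0 c"

definition uvar :: "nat \<Rightarrow> nat \<Rightarrow> Atil" where
  "uvar k i = Poly_Mapping.single (Poly_Mapping.single (k, i) 1) 1"

text \<open>The R-linear derivation with D(u_k^(i)) = u_k^(i+1) (and D T = 0),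
  written out on monomials by the Leibniz rule.\<close>
definition derA :: "Atil \<Rightarrow> Atil" where
  "derA p = (\<Sum>\<alpha>\<in>Poly_Mapping.keys p. \<Sum>v\<in>Poly_Mapping.keys \<alpha>.
      Poly_Mapping.single
        (\<alpha> - Poly_Mapping.single v 1 + Poly_Mapping.single (fst v, Suc (snd v)) 1)
        (Poly_Mapping.lookup p \<alpha> * of_nat (Poly_Mapping.lookup \<alpha> v)))"

definition binomT :: "complex poly \<Rightarrow> nat \<Rightarrow> complex poly" where
  "binomT x j = smult (1 / of_nat (fact j)) (\<Prod>l<j. x - of_nat l)"

definition selfadj_rel :: "nat \<Rightarrow> Atil" where
  "selfadj_rel r = uvar r 0 -
     (\<Sum>k\<le>r. constA (binomT ([:0,1:] - of_nat k) (r - k) * (-1) ^ k) * uvar k (r - k))"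

definition rels :: "Atil set" where
  "rels = insert (uvar 0 0 - 1) (range selfadj_rel)"

inductive_set dideal :: "Atil set \<Rightarrow> Atil set" for G where
  gen: "g \<in> G \<Longrightarrow> g \<in> dideal G"
| zero: "0 \<in> dideal G"
| add: "a \<in> dideal G \<Longrightarrow> b \<in> dideal G \<Longrightarrow> a + b \<in> dideal G"
| mult: "a \<in> dideal G \<Longrightarrow> c * a \<in> dideal G"
| der: "a \<in> dideal G \<Longrightarrow> derA a \<in> dideal G"

text \<open>Evaluation of a polynomial P over C[T] in variables y_(m,i) at y_(m,i) := u_{2m}^(i) in A-tilde.
  Then P(ubar_{2m}^(i)) = 0 in the quotient A iff this lies in dideal rels.\<close>
definition evalU :: "((nat \<times> nat, nat) poly_mapping, complex poly) poly_mapping \<Rightarrow> Atil" where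
  "evalU P = (\<Sum>\<alpha>\<in>Poly_Mapping.keys P. constA (Poly_Mapping.lookup P \<alpha>) *
       (\<Prod>v\<in>Poly_Mapping.keys \<alpha>. uvar (2 * fst v) (snd v) ^ Poly_Mapping.lookup \<alpha> v))"

end

theory Submission
  imports Defs
begin

text \<open>
  Let \<open>B\<close> send the coefficient sequence of \<open>L = \<Sum>\<^sub>k a\<^sub>k \<partial>\<^bsup>T-k\<^esup>\<close> to that of \<open>L\<^sup>*\<close>.
  The relations of \<open>\<A>\<close> say \<open>u = B u\<close>; \<open>B\<close> is an involution and is triangular with diagonal
  entry \<open>(-1)\<^sup>r\<close> at index \<open>r\<close>. For odd \<open>r\<close> the relation can therefore be solved for \<open>u\<^sub>r\<close>
  in terms of lower coefficients, which recursively defines \<open>ubar r\<close> from \<open>1\<close> and the free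
  variables \<open>u\<^sub>2\<^sub>m\<close>. For even \<open>r\<close> the relation follows from the lower ones: \<open>d = u - B u\<close>
  satisfies \<open>B d = -d\<close>, which reads \<open>d\<^sub>r = -d\<^sub>r\<close> once \<open>d\<^sub>k = 0\<close> for \<open>k < r\<close>.
  So the differential substitution \<open>u\<^sub>k\<^bsup>(i)\<^esup> \<mapsto> \<partial>\<^sup>i (ubar k)\<close> annihilates the differential
  ideal of relations but fixes every polynomial in the \<open>u\<^sub>2\<^sub>m\<^bsup>(i)\<^esup>\<close> with \<open>m > 0\<close>; such a
  polynomial lying in the ideal is therefore zero.
\<close>

lemma sum_single_lookup: "(\<Sum>\<alpha>\<in>Poly_Mapping.keys p. Poly_Mapping.single \<alpha> (Poly_Mapping.lookup p \<alpha>)) = p"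
  by (rule poly_mapping_eqI) (auto simp: lookup_sum lookup_single when_def in_keys_iff)

definition lin_ext :: "('a \<Rightarrow> 'b::zero \<Rightarrow> 'c::comm_monoid_add) \<Rightarrow> ('a \<Rightarrow>\<^sub>0 'b) \<Rightarrow> 'c" where
  "lin_ext F p = (\<Sum>\<alpha>\<in>Poly_Mapping.keys p. F \<alpha> (Poly_Mapping.lookup p \<alpha>))"

lemma additive_lin_ext:
  assumes "\<And>\<alpha>. additive (F \<alpha>)"
  shows "additive (lin_ext F)"
  unfolding lin_ext_def
  by (intro additive.intro setsum_keys_plus_distrib) (simp_all add: assms additive.zero additive.add)

lemma lin_ext_single:
  assumes "F \<alpha> 0 = 0"
  shows "lin_ext F (Poly_Mapping.single \<alpha> c) = F \<alpha> c"
  using assms by (cases "c = 0") (auto simp: lin_ext_def)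

lemma lin_ext_mult:
  fixes p q :: "'a::monoid_add \<Rightarrow>\<^sub>0 'b::{semiring_0,ab_group_add}"
  assumes "\<And>\<alpha>. additive (F \<alpha>)"
  shows "lin_ext F (p * q) = (\<Sum>\<alpha>\<in>Poly_Mapping.keys p. \<Sum>\<beta>\<in>Poly_Mapping.keys q.
      F (\<alpha> + \<beta>) (Poly_Mapping.lookup p \<alpha> * Poly_Mapping.lookup q \<beta>))"
proof -
  have "p * q = (\<Sum>\<alpha>\<in>Poly_Mapping.keys p. \<Sum>\<beta>\<in>Poly_Mapping.keys q.
      Poly_Mapping.single (\<alpha> + \<beta>) (Poly_Mapping.lookup p \<alpha> * Poly_Mapping.lookup q \<beta>))"
    by (subst (1 2) sum_single_lookup[symmetric]) (simp add: sum_product mult_single)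
  then show ?thesis
    by (simp add: additive.sum[OF additive_lin_ext[OF assms]] lin_ext_single additive.zero[OF assms])
qed

section \<open>Substitution homomorphisms\<close>

lemma additive_constA: "additive constA"
  by (simp add: additive_def constA_def single_add)

lemma constA_mult: "constA (a * b) = constA a * constA b"
  by (simp add: constA_def mult_single)

lemma constA_0 [simp]: "constA 0 = 0"
  by (simp add: constA_def)

lemma constA_1 [simp]: "constA 1 = 1"
  by (simp add: constA_def)

lemma constA_mult_single: "constA c * Poly_Mapping.single \<alpha> d = Poly_Mapping.single \<alpha> (c * d)"
  by (simp add: constA_def mult_single)

definition subst_monom :: "(nat \<times> nat \<Rightarrow> Atil) \<Rightarrow> (nat \<times> nat \<Rightarrow>\<^sub>0 nat) \<Rightarrow> Atil" where
  "subst_monom \<sigma> \<alpha> = (\<Prod>v\<in>Poly_Mapping.keys \<alpha>. \<sigma> v ^ Poly_Mapping.lookup \<alpha> v)"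

definition substA :: "(nat \<times> nat \<Rightarrow> Atil) \<Rightarrow> Atil \<Rightarrow> Atil" where
  "substA \<sigma> = lin_ext (\<lambda>\<alpha> c. constA c * subst_monom \<sigma> \<alpha>)"

lemma subst_monom_superset:
  "finite S \<Longrightarrow> Poly_Mapping.keys \<alpha> \<subseteq> S \<Longrightarrow>
     subst_monom \<sigma> \<alpha> = (\<Prod>v\<in>S. \<sigma> v ^ Poly_Mapping.lookup \<alpha> v)"
  unfolding subst_monom_def by (rule prod.mono_neutral_left) (auto simp: in_keys_iff)

lemma subst_monom_add: "subst_monom \<sigma> (\<alpha> + \<beta>) = subst_monom \<sigma> \<alpha> * subst_monom \<sigma> \<beta>"
proof -
  let ?S = "Poly_Mapping.keys \<alpha> \<union> Poly_Mapping.keys \<beta>"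
  have "subst_monom \<sigma> (\<alpha> + \<beta>) = (\<Prod>v\<in>?S. \<sigma> v ^ Poly_Mapping.lookup (\<alpha> + \<beta>) v)"
    by (rule subst_monom_superset) (use keys_add[of \<alpha> \<beta>] in auto)
  also have "\<dots> = (\<Prod>v\<in>?S. \<sigma> v ^ Poly_Mapping.lookup \<alpha> v) * (\<Prod>v\<in>?S. \<sigma> v ^ Poly_Mapping.lookup \<beta> v)"
    by (simp add: lookup_add power_add prod.distrib)
  finally show ?thesis
    by (simp flip: subst_monom_superset)
qed

lemma substA_expand:
  "substA \<sigma> p = (\<Sum>\<alpha>\<in>Poly_Mapping.keys p.
      constA (Poly_Mapping.lookup p \<alpha>) * (\<Prod>v\<in>Poly_Mapping.keys \<alpha>. \<sigma> v ^ Poly_Mapping.lookup \<alpha> v))"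
  by (simp add: substA_def lin_ext_def subst_monom_def)

lemma additive_constA_mult: "additive (\<lambda>c. constA c * x)"
  by (simp add: additive_def additive.add[OF additive_constA] distrib_right)

lemma additive_substA: "additive (substA \<sigma>)"
  unfolding substA_def by (intro additive_lin_ext additive_constA_mult)

lemma substA_single: "substA \<sigma> (Poly_Mapping.single \<alpha> c) = constA c * subst_monom \<sigma> \<alpha>"
  unfolding substA_def by (simp add: lin_ext_single)

lemma substA_mult: "substA \<sigma> (p * q) = substA \<sigma> p * substA \<sigma> q"
  unfolding substA_def lin_ext_mult[OF additive_constA_mult]
  by (simp add: lin_ext_def sum_product constA_mult subst_monom_add mult_ac)

lemma substA_constA: "substA \<sigma> (constA c) = constA c"
  by (simp add: constA_def substA_single subst_monom_def)

lemma substA_1 [simp]: "substA \<sigma> 1 = 1"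
  using substA_constA[of \<sigma> 1] by simp

lemma substA_uvar: "substA \<sigma> (uvar k i) = \<sigma> (k, i)"
  by (simp add: uvar_def substA_single subst_monom_def)

lemma substA_power: "substA \<sigma> (x ^ n) = substA \<sigma> x ^ n"
  by (induction n) (simp_all add: substA_mult)

lemma substA_prod: "substA \<sigma> (prod f A) = (\<Prod>x\<in>A. substA \<sigma> (f x))"
  by (induction A rule: infinite_finite_induct) (simp_all add: substA_mult)

definition rename_monom :: "('a \<Rightarrow> 'b) \<Rightarrow> ('a \<Rightarrow>\<^sub>0 nat) \<Rightarrow> ('b \<Rightarrow>\<^sub>0 nat)" where
  "rename_monom g \<alpha> = (\<Sum>v\<in>Poly_Mapping.keys \<alpha>. Poly_Mapping.single (g v) (Poly_Mapping.lookup \<alpha> v))"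

lemma lookup_rename_monom:
  assumes "inj g"
  shows "Poly_Mapping.lookup (rename_monom g \<alpha>) (g u) = Poly_Mapping.lookup \<alpha> u"
proof -
  have "Poly_Mapping.lookup (rename_monom g \<alpha>) (g u) =
      (\<Sum>v\<in>Poly_Mapping.keys \<alpha>. if v = u then Poly_Mapping.lookup \<alpha> v else 0)"
    unfolding rename_monom_def lookup_sum
    by (rule sum.cong) (auto simp: lookup_single when_def dest: injD[OF assms])
  also have "\<dots> = Poly_Mapping.lookup \<alpha> u"
    by (simp add: in_keys_iff)
  finally show ?thesis .
qed

lemma inj_rename_monom: "inj g \<Longrightarrow> inj (rename_monom g)"
  by (rule injI, rule poly_mapping_eqI) (metis lookup_rename_monom)

lemma subst_monom_uvar:
  "subst_monom (\<lambda>v. case_prod uvar (g v)) \<alpha> = Poly_Mapping.single (rename_monom g \<alpha>) 1"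
proof -
  have "uvar k i ^ n = Poly_Mapping.single (Poly_Mapping.single (k, i) n) 1" for k i n
    by (induction n) (simp_all add: uvar_def mult_single flip: single_add)
  moreover have "(\<Prod>v\<in>A. Poly_Mapping.single (f v) (1::complex poly)) = Poly_Mapping.single (sum f A) 1"
    for A and f :: "'a \<Rightarrow> nat \<times> nat \<Rightarrow>\<^sub>0 nat"
    by (induction A rule: infinite_finite_induct) (simp_all add: mult_single)
  ultimately show ?thesis
    by (simp add: subst_monom_def rename_monom_def case_prod_beta)
qed

lemma substA_uvar_rename:
  "substA (\<lambda>v. case_prod uvar (g v)) p =
     (\<Sum>\<alpha>\<in>Poly_Mapping.keys p. Poly_Mapping.single (rename_monom g \<alpha>) (Poly_Mapping.lookup p \<alpha>))"
  by (simp add: substA_def lin_ext_def subst_monom_uvar constA_mult_single)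

lemma substA_uvar_id: "substA (case_prod uvar) p = p"
proof -
  have "rename_monom id \<alpha> = \<alpha>" for \<alpha> :: "nat \<times> nat \<Rightarrow>\<^sub>0 nat"
    unfolding rename_monom_def id_def by (rule sum_single_lookup)
  then show ?thesis
    using substA_uvar_rename[of id p] by (simp add: sum_single_lookup)
qed

lemma Atil_induct [case_names const var add mult]:
  assumes const: "\<And>c. Q (constA c)"
    and var: "\<And>k i. Q (uvar k i)"
    and add: "\<And>x y. Q x \<Longrightarrow> Q y \<Longrightarrow> Q (x + y)"
    and mult: "\<And>x y. Q x \<Longrightarrow> Q y \<Longrightarrow> Q (x * y)"
  shows "Q p"
proof -
  have sum: "Q (sum f A)" if "\<And>x. Q (f x)" for f :: "'a \<Rightarrow> Atil" and A
    using that const[of 0] by (induction A rule: infinite_finite_induct) (simp_all add: add)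
  have prod: "Q (prod f A)" if "\<And>x. Q (f x)" for f :: "'a \<Rightarrow> Atil" and A
    using that const[of 1] by (induction A rule: infinite_finite_induct) (simp_all add: mult)
  have power: "Q (x ^ n)" if "Q x" for x n
    using that const[of 1] by (induction n) (simp_all add: mult)
  have "Q (substA (case_prod uvar) p)"
    unfolding substA_expand
    by (intro sum prod mult const power) (simp add: var case_prod_beta)
  then show ?thesis
    by (simp add: substA_uvar_id)
qed

lemma substA_substA: "substA \<sigma> (substA \<tau> p) = substA (\<lambda>v. substA \<sigma> (\<tau> v)) p"
  by (simp only: substA_expand[of \<tau> p] substA_expand[of "\<lambda>v. substA \<sigma> (\<tau> v)" p])
    (simp add: additive.sum[OF additive_substA] substA_mult substA_constA substA_prod substA_power)

lemma substA_cong: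
  assumes "\<And>\<alpha> v. \<alpha> \<in> Poly_Mapping.keys p \<Longrightarrow> v \<in> Poly_Mapping.keys \<alpha> \<Longrightarrow> \<sigma> v = \<tau> v"
  shows "substA \<sigma> p = substA \<tau> p"
  using assms by (simp add: substA_expand)

lemma substA_uvar_rename_eq_0D:
  assumes "inj g" and "substA (\<lambda>v. case_prod uvar (g v)) p = 0"
  shows "p = 0"
proof (rule poly_mapping_eqI)
  fix \<beta>
  have "Poly_Mapping.lookup p \<beta> =
      (\<Sum>\<alpha>\<in>Poly_Mapping.keys p. if \<alpha> = \<beta> then Poly_Mapping.lookup p \<alpha> else 0)"
    by (simp add: in_keys_iff)
  also have "\<dots> = Poly_Mapping.lookup (substA (\<lambda>v. case_prod uvar (g v)) p) (rename_monom g \<beta>)"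
    unfolding substA_uvar_rename lookup_sum
    by (rule sum.cong) (auto simp: lookup_single when_def dest: injD[OF inj_rename_monom[OF assms(1)]])
  finally show "Poly_Mapping.lookup p \<beta> = Poly_Mapping.lookup 0 \<beta>"
    by (simp add: assms(2))
qed

definition derA_monom :: "(nat \<times> nat \<Rightarrow>\<^sub>0 nat) \<Rightarrow> complex poly \<Rightarrow> Atil" where
  "derA_monom \<alpha> c = (\<Sum>v\<in>Poly_Mapping.keys \<alpha>.
      Poly_Mapping.single (\<alpha> - Poly_Mapping.single v 1 + Poly_Mapping.single (fst v, Suc (snd v)) 1)
        (c * of_nat (Poly_Mapping.lookup \<alpha> v)))"

lemma derA_eq_lin_ext: "derA = lin_ext derA_monom"
  by (simp add: fun_eq_iff derA_def lin_ext_def derA_monom_def)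

lemma additive_derA_monom: "additive (derA_monom \<alpha>)"
  by (simp add: additive_def derA_monom_def distrib_right single_add sum.distrib)

lemma additive_derA: "additive derA"
  unfolding derA_eq_lin_ext by (intro additive_lin_ext additive_derA_monom)

lemma derA_single: "derA (Poly_Mapping.single \<alpha> c) = derA_monom \<alpha> c"
  by (simp add: derA_eq_lin_ext lin_ext_single additive.zero[OF additive_derA_monom])

lemma derA_monom_mult_single:
  "derA_monom \<alpha> a * Poly_Mapping.single \<beta> b = (\<Sum>v\<in>Poly_Mapping.keys \<alpha>.
      Poly_Mapping.single (\<alpha> + \<beta> - Poly_Mapping.single v 1 + Poly_Mapping.single (fst v, Suc (snd v)) 1)
        (a * b * of_nat (Poly_Mapping.lookup \<alpha> v)))"
  unfolding derA_monom_def sum_distrib_right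
proof (rule sum.cong)
  fix v assume "v \<in> Poly_Mapping.keys \<alpha>"
  then have "\<alpha> + \<beta> - Poly_Mapping.single v 1 = \<alpha> - Poly_Mapping.single v 1 + \<beta>"
    by (intro poly_mapping_eqI) (auto simp: lookup_add lookup_minus lookup_single when_def in_keys_iff)
  then show "Poly_Mapping.single (\<alpha> - Poly_Mapping.single v 1 + Poly_Mapping.single (fst v, Suc (snd v)) 1)
        (a * of_nat (Poly_Mapping.lookup \<alpha> v)) * Poly_Mapping.single \<beta> b =
      Poly_Mapping.single (\<alpha> + \<beta> - Poly_Mapping.single v 1 + Poly_Mapping.single (fst v, Suc (snd v)) 1)
        (a * b * of_nat (Poly_Mapping.lookup \<alpha> v))"
    by (simp add: mult_single ac_simps)
qed simp

lemma derA_monom_leibniz: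
  "derA_monom (\<alpha> + \<beta>) (a * b) =
     derA_monom \<alpha> a * Poly_Mapping.single \<beta> b + Poly_Mapping.single \<alpha> a * derA_monom \<beta> b"
proof -
  let ?K = "Poly_Mapping.keys (\<alpha> + \<beta>)"
  let ?t = "\<lambda>v. \<alpha> + \<beta> - Poly_Mapping.single v 1 + Poly_Mapping.single (fst v, Suc (snd v)) 1"
  have keys: "Poly_Mapping.keys \<alpha> \<subseteq> ?K" "Poly_Mapping.keys \<beta> \<subseteq> ?K"
    by (auto simp: in_keys_iff lookup_add)
  have "derA_monom (\<alpha> + \<beta>) (a * b) =
      (\<Sum>v\<in>?K. Poly_Mapping.single (?t v) (a * b * of_nat (Poly_Mapping.lookup \<alpha> v))) +
      (\<Sum>v\<in>?K. Poly_Mapping.single (?t v) (a * b * of_nat (Poly_Mapping.lookup \<beta> v)))"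
    unfolding derA_monom_def by (simp add: lookup_add distrib_left single_add sum.distrib)
  also have "\<dots> =
      (\<Sum>v\<in>Poly_Mapping.keys \<alpha>. Poly_Mapping.single (?t v) (a * b * of_nat (Poly_Mapping.lookup \<alpha> v))) +
      (\<Sum>v\<in>Poly_Mapping.keys \<beta>. Poly_Mapping.single (?t v) (a * b * of_nat (Poly_Mapping.lookup \<beta> v)))"
    using keys by (intro arg_cong2[where f = "(+)"] sum.mono_neutral_right) (auto simp: in_keys_iff)
  also have "\<dots> = derA_monom \<alpha> a * Poly_Mapping.single \<beta> b + derA_monom \<beta> b * Poly_Mapping.single \<alpha> a"
    unfolding derA_monom_mult_single add.commute[of \<beta> \<alpha>] mult.commute[of b a] ..
  finally show ?thesis
    by (simp only: mult.commute[of "derA_monom \<beta> b"])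
qed

lemma derA_mult: "derA (p * q) = derA p * q + p * derA q"
proof -
  let ?P = "\<lambda>\<alpha>. Poly_Mapping.single \<alpha> (Poly_Mapping.lookup p \<alpha>)"
  let ?Q = "\<lambda>\<beta>. Poly_Mapping.single \<beta> (Poly_Mapping.lookup q \<beta>)"
  have "derA (p * q) = (\<Sum>\<alpha>\<in>Poly_Mapping.keys p. \<Sum>\<beta>\<in>Poly_Mapping.keys q.
      derA_monom \<alpha> (Poly_Mapping.lookup p \<alpha>) * ?Q \<beta> + ?P \<alpha> * derA_monom \<beta> (Poly_Mapping.lookup q \<beta>))"
    unfolding derA_eq_lin_ext lin_ext_mult[OF additive_derA_monom] derA_monom_leibniz ..
  also have "\<dots> = derA (\<Sum>\<alpha>\<in>Poly_Mapping.keys p. ?P \<alpha>) * (\<Sum>\<beta>\<in>Poly_Mapping.keys q. ?Q \<beta>) +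
      (\<Sum>\<alpha>\<in>Poly_Mapping.keys p. ?P \<alpha>) * derA (\<Sum>\<beta>\<in>Poly_Mapping.keys q. ?Q \<beta>)"
    by (simp add: additive.sum[OF additive_derA] derA_single sum.distrib sum_product)
  finally show ?thesis
    by (simp only: sum_single_lookup)
qed

lemma derA_constA: "derA (constA c) = 0"
  by (simp add: constA_def derA_single derA_monom_def)

lemma derA_constA_mult: "derA (constA c * p) = constA c * derA p"
  by (simp add: derA_mult derA_constA)

lemma derA_uvar: "derA (uvar k i) = uvar k (Suc i)"
  by (simp add: uvar_def derA_single derA_monom_def)

lemma additive_derA_pow: "additive (derA ^^ n)"
  by (induction n) (simp_all add: additive_def additive.add[OF additive_derA])

lemma derA_pow_constA_mult: "(derA ^^ n) (constA c * p) = constA c * (derA ^^ n) p"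
  by (induction n) (simp_all add: derA_constA_mult)

lemma derA_pow_uvar: "(derA ^^ i) (uvar k 0) = uvar k i"
  by (induction i) (simp_all add: derA_uvar)

lemma substA_derA:
  assumes "\<And>k i. \<sigma> (k, Suc i) = derA (\<sigma> (k, i))"
  shows "substA \<sigma> (derA p) = derA (substA \<sigma> p)"
proof (induction p rule: Atil_induct)
  case (const c)
  show ?case by (simp add: derA_constA substA_constA additive.zero[OF additive_substA])
next
  case (var k i)
  show ?case by (simp add: derA_uvar substA_uvar assms)
next
  case (add x y)
  then show ?case by (simp add: additive.add[OF additive_derA] additive.add[OF additive_substA])
next
  case (mult x y)
  then show ?case by (simp add: derA_mult substA_mult additive.add[OF additive_substA])
qed

lemma substA_dideal:
  assumes "\<And>k i. \<sigma> (k, Suc i) = derA (\<sigma> (k, i))"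
    and "\<And>g. g \<in> G \<Longrightarrow> substA \<sigma> g = 0"
    and "a \<in> dideal G"
  shows "substA \<sigma> a = 0"
  using assms(3)
proof (induction rule: dideal.induct)
  case (gen g)
  then show ?case by (rule assms(2))
next
  case zero
  show ?case by (rule additive.zero[OF additive_substA])
next
  case (add a b)
  then show ?case by (simp add: additive.add[OF additive_substA])
next
  case (mult a c)
  then show ?case by (simp add: substA_mult)
next
  case (der a)
  then show ?case using substA_derA[of \<sigma> a, OF assms(1)] by (simp add: additive.zero[OF additive_derA])
qed

section \<open>The adjoint on coefficient sequences\<close>

lemma binomT_mult:
  assumes "j \<le> n"
  shows "binomT x j * binomT (x - of_nat j) (n - j) = of_nat (n choose j) * binomT x n"
proof -
  obtain m where n: "n = j + m"
    using assms le_Suc_ex by blast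
  have "(\<Prod>l<n. x - of_nat l) = (\<Prod>l<j. x - of_nat l) * (\<Prod>l<m. x - of_nat j - of_nat l)"
    unfolding n by (induction m) (simp_all add: algebra_simps)
  moreover have "(1 / fact j) * (1 / fact m) = (of_nat (n choose j) :: complex) * (1 / fact n)"
    using binomial_fact[OF assms, where 'a = complex] n by (simp add: field_simps)
  ultimately show ?thesis
    using n by (simp add: binomT_def of_nat_poly mult_ac)
qed

definition selfadj_coeff :: "nat \<Rightarrow> nat \<Rightarrow> complex poly" where
  "selfadj_coeff k r = binomT ([:0, 1:] - of_nat k) (r - k) * (-1) ^ k"

lemma selfadj_coeff_diag: "selfadj_coeff r r = (-1) ^ r"
  by (simp add: selfadj_coeff_def binomT_def)

lemma selfadj_coeff_mult:
  "selfadj_coeff (k + j) (k + j + m) * selfadj_coeff k (k + j) =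
    (-1) ^ j * of_nat ((j + m) choose j) * binomT ([:0, 1:] - of_nat k) (j + m)"
proof -
  define x :: "complex poly" where "x = [:0, 1:] - of_nat k"
  have "selfadj_coeff (k + j) (k + j + m) * selfadj_coeff k (k + j) =
      binomT x j * binomT (x - of_nat j) (j + m - j) * ((-1) ^ j * ((-1) ^ k * (-1) ^ k))"
    by (simp add: selfadj_coeff_def x_def power_add algebra_simps)
  also have "(-1) ^ k * (-1) ^ k = (1 :: complex poly)"
    by (simp flip: power_add)
  finally show ?thesis
    using binomT_mult[of j "j + m" x] by (simp add: x_def mult_ac)
qed

lemma selfadj_coeff_involution:
  assumes "k \<le> s"
  shows "(\<Sum>r=k..s. selfadj_coeff r s * selfadj_coeff k r) = (if k = s then 1 else 0)"
proof -
  obtain n where s: "s = k + n"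
    using assms le_Suc_ex by blast
  have "(\<Sum>r=k..s. selfadj_coeff r s * selfadj_coeff k r) =
      (\<Sum>j=0..n. selfadj_coeff (k + j) (k + j + (n - j)) * selfadj_coeff k (k + j))"
    unfolding sum.atLeastAtMost_shift_0[OF assms] by (intro sum.cong) (auto simp: s)
  also have "\<dots> = binomT ([:0, 1:] - of_nat k) n * (\<Sum>j\<le>n. (-1) ^ j * of_nat (n choose j))"
    unfolding selfadj_coeff_mult sum_distrib_left atLeast0AtMost
    by (intro sum.cong) (simp_all add: mult_ac)
  also have "\<dots> = (if k = s then 1 else 0)"
    using choose_alternating_sum[of n, where 'a = "complex poly"] by (simp add: s binomT_def)
  finally show ?thesis .
qed

text \<open>\<open>adjoint_coeffs a r\<close> is the coefficient of \<open>\<partial>\<^bsup>T-r\<^esup>\<close> in \<open>L\<^sup>*\<close> for \<open>L = \<Sum>\<^sub>k a k \<partial>\<^bsup>T-k\<^esup>\<close>.\<close>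

definition adjoint_coeffs :: "(nat \<Rightarrow> Atil) \<Rightarrow> nat \<Rightarrow> Atil" where
  "adjoint_coeffs a r = (\<Sum>k\<le>r. constA (selfadj_coeff k r) * (derA ^^ (r - k)) (a k))"

lemma adjoint_coeffs_split:
  "adjoint_coeffs a r =
     constA ((-1) ^ r) * a r + (\<Sum>k<r. constA (selfadj_coeff k r) * (derA ^^ (r - k)) (a k))"
  by (simp add: adjoint_coeffs_def lessThan_Suc_atMost[symmetric] selfadj_coeff_diag)

lemma adjoint_coeffs_diff:
  "adjoint_coeffs (\<lambda>r. a r - b r) s = adjoint_coeffs a s - adjoint_coeffs b s"
  by (simp add: adjoint_coeffs_def additive.diff[OF additive_derA_pow] right_diff_distrib sum_subtractf)

lemma adjoint_coeffs_involution: "adjoint_coeffs (adjoint_coeffs a) s = a s"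
proof -
  let ?c = "\<lambda>k r. constA (selfadj_coeff k r)"
  let ?a = "\<lambda>k. (derA ^^ (s - k)) (a k)"
  have derA_pow_pow: "(derA ^^ (s - r)) ((derA ^^ (r - k)) x) = (derA ^^ (s - k)) x"
    if "k \<le> r" "r \<le> s" for k r x
  proof -
    have "s - k = (s - r) + (r - k)"
      using that by simp
    then show ?thesis
      by (simp add: funpow_add)
  qed
  have "adjoint_coeffs (adjoint_coeffs a) s = (\<Sum>r\<le>s. \<Sum>k\<le>r. ?c r s * (?c k r * ?a k))"
    unfolding adjoint_coeffs_def
    by (intro sum.cong refl)
      (simp add: additive.sum[OF additive_derA_pow] derA_pow_constA_mult sum_distrib_left derA_pow_pow)
  also have "\<dots> = (\<Sum>k\<le>s. \<Sum>r=k..s. ?c r s * (?c k r * ?a k))"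
  proof -
    have "{k\<in>{..s}. k \<le> r} = {..r}" if "r \<le> s" for r
      using that by auto
    moreover have "{r\<in>{..s}. k \<le> r} = {k..s}" for k
      by auto
    ultimately show ?thesis
      using sum.swap_restrict[of "{..s}" "{..s}" "\<lambda>r k. ?c r s * (?c k r * ?a k)" "\<lambda>r k. k \<le> r"]
      by simp
  qed
  also have "\<dots> = (\<Sum>k\<le>s. constA (\<Sum>r=k..s. selfadj_coeff r s * selfadj_coeff k r) * ?a k)"
    by (simp add: additive.sum[OF additive_constA] constA_mult sum_distrib_right mult.assoc)
  also have "\<dots> = (\<Sum>k\<le>s. if k = s then ?a k else 0)"
    by (intro sum.cong) (simp_all add: selfadj_coeff_involution)
  also have "\<dots> = a s"
    by simp
  finally show ?thesis .
qed

section \<open>Solving the relations for the odd coefficients\<close>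

lemma constA_half_double: "constA [:1/2:] * (x + x) = x"
proof -
  have "constA [:1/2:] * (x + x) = (constA [:1/2:] + constA [:1/2:]) * x"
    by (simp add: distrib_left distrib_right)
  also have "constA [:1/2:] + constA [:1/2:] = constA ([:1/2:] + [:1/2:])"
    by (rule additive.add[OF additive_constA, symmetric])
  also have "[:1/2:] + [:1/2:] = (1 :: complex poly)"
    by (simp add: one_pCons)
  finally show ?thesis
    by simp
qed

fun ubar :: "nat \<Rightarrow> Atil" where
  "ubar r = (if r = 0 then 1 else if even r then uvar r 0
     else constA [:1/2:] * (\<Sum>k<r. constA (selfadj_coeff k r) * (derA ^^ (r - k)) (ubar k)))"

declare ubar.simps [simp del]

lemma ubar_selfadjoint: "adjoint_coeffs ubar s = ubar s"
proof (induction s rule: less_induct)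
  case (less s)
  let ?lower = "\<Sum>k<s. constA (selfadj_coeff k s) * (derA ^^ (s - k)) (ubar k)"
  show ?case
  proof (cases "odd s")
    case True
    then have "ubar s = constA [:1/2:] * ?lower"
      by (subst ubar.simps) (simp add: odd_pos)
    then have "ubar s + ubar s = ?lower"
      by (simp only: distrib_left[symmetric] constA_half_double)
    moreover have "constA ((-1) ^ s) = - 1"
      using True by (simp add: constA_def single_uminus)
    ultimately show ?thesis
      unfolding adjoint_coeffs_split[of ubar s] by (simp flip: \<open>ubar s + ubar s = ?lower\<close>)
  next
    case False
    define d where "d r = ubar r - adjoint_coeffs ubar r" for r
    have "adjoint_coeffs d s = - d s"
      unfolding d_def adjoint_coeffs_diff[of ubar] adjoint_coeffs_involution by simp
    moreover have "adjoint_coeffs d s = d s"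
    proof -
      have "d k = 0" if "k < s" for k
        using less that by (simp add: d_def)
      then show ?thesis
        using False unfolding adjoint_coeffs_split[of d s]
        by (simp add: additive.zero[OF additive_derA_pow])
    qed
    ultimately have "d s + d s = 0"
      by (metis add.right_inverse)
    then have "d s = 0"
      by (metis constA_half_double mult_zero_right)
    then show ?thesis
      by (simp add: d_def)
  qed
qed

definition ubar_deriv :: "nat \<times> nat \<Rightarrow> Atil" where
  "ubar_deriv v = (derA ^^ snd v) (ubar (fst v))"

lemma substA_ubar_deriv_uvar_even:
  assumes "0 < m"
  shows "substA ubar_deriv (uvar (2 * m) i) = uvar (2 * m) i"
  using assms by (simp add: substA_uvar ubar_deriv_def ubar.simps derA_pow_uvar)

lemma substA_ubar_deriv_rels:
  assumes "g \<in> rels"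
  shows "substA ubar_deriv g = 0"
  using assms unfolding rels_def
proof (elim insertE rangeE)
  assume "g = uvar 0 0 - 1"
  then show ?thesis
    by (simp add: additive.diff[OF additive_substA] substA_uvar ubar_deriv_def ubar.simps)
next
  fix r
  assume "g = selfadj_rel r"
  then have "substA ubar_deriv g = ubar r - adjoint_coeffs ubar r"
    by (simp add: selfadj_rel_def adjoint_coeffs_def selfadj_coeff_def ubar_deriv_def
        additive.diff[OF additive_substA] additive.sum[OF additive_substA]
        substA_mult substA_constA substA_uvar)
  then show ?thesis
    by (simp add: ubar_selfadjoint)
qed

lemma evalU_eq_substA: "evalU P = substA (\<lambda>v. uvar (2 * fst v) (snd v)) P"
  by (simp add: evalU_def substA_expand)

theorem mainTheorem20:
  fixes P :: "((nat \<times> nat, nat) poly_mapping, complex poly) poly_mapping"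
  assumes "\<forall>\<alpha>\<in>Poly_Mapping.keys P. \<forall>v\<in>Poly_Mapping.keys \<alpha>. 0 < fst v"
    and "evalU P \<in> dideal rels"
  shows "P = 0"
proof -
  have "substA ubar_deriv (evalU P) = 0"
    by (rule substA_dideal[OF _ substA_ubar_deriv_rels assms(2)]) (simp add: ubar_deriv_def)
  moreover have "substA ubar_deriv (evalU P) = evalU P"
    unfolding evalU_eq_substA substA_substA
    using assms(1) by (intro substA_cong substA_ubar_deriv_uvar_even) blast
  ultimately have "substA (\<lambda>v. case_prod uvar (2 * fst v, snd v)) P = 0"
    by (simp add: evalU_eq_substA)
  moreover have "inj (\<lambda>v :: nat \<times> nat. (2 * fst v, snd v))"
    by (auto intro: injI simp: prod_eq_iff)
  ultimately show ?thesis
    by (rule substA_uvar_rename_eq_0D[rotated])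
qed

end
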